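(* Let $\rho$ be a density operator with purity $\wp=\operatorname{tr}(\rho^2)$ and $O$ a traceless Hermitian operator on $\mathcal H$. Let $\mathcal E(\rho)=\{W\rho W^\dagger\}$ and $\mathcal E(O)=\{WOW^\dagger\}$ with $W$ Haar-random in $U(d)$. Then $$\mathbb E_{\rho'\sim\mathcal E(\rho)}[\operatorname{tr}(\rho'O)]^2=\mathbb E_{O'\sim\mathcal E(O)}[\operatorname{tr}(\rho O')]^2=\frac{d\wp-1}{d(d^2-1)}\|O\|_2^2,$$ $$\mathbb E_{\rho'\sim\mathcal E(\rho)}\|\Xi_{\rho',O}\|_2^2=\mathbb E_{O'\sim\mathcal E(O)}\|\Xi_{\rho,O'}\|_2^2=\frac{d^2\wp-d}{d^2-1}\|O\|_2^2,$$ $$\mathbb E_{\rho'\sim\mathcal E(\rho)}\tilde\Xi_{\rho',O}\cdot\Xi_{\rho',O}=\mathbb E_{O'\sim\mathcal E(O)}\tilde\Xi_{\rho,O'}\cdot\Xi_{\rho,O'}=\frac{d\wp-1}{d^2-1}\|O\|_2^2.$$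
   Context: $n\ge1$, $d=2^n$, $\mathcal H=(\mathbb C^2)^{\otimes n}$, $\overline{\mathcal P}_n=\{I,X,Y,Z\}^{\otimes n}$. For operators $A,B$ define functions on $\overline{\mathcal P}_n$ regarded as vectors in $\mathbb R^{d^2}$ (Euclidean norm, standard inner product): $\Xi_{A,B}(P)=\operatorname{tr}(AP)\operatorname{tr}(BP)$, $\tilde\Xi_{A,B}(P)=\operatorname{tr}(APBP)$. $\|O\|_2$ is the Hilbert–Schmidt norm. *)

theory Defs
  imports "HOL-Probability.Probability"
begin

text \<open>Hilbert space of n qubits: basis indexed by 'n \<Rightarrow> bool (n = CARD('n)), so d = 2^n.
  Operators are complex matrices indexed by this basis.\<close>

type_synonym 'n op = "complex ^ ('n \<Rightarrow> bool) ^ ('n \<Rightarrow> bool)"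

definition cadj :: "complex ^ 'a ^ 'a \<Rightarrow> complex ^ 'a ^ 'a" where
  "cadj M = (\<chi> i j. cnj (M $ j $ i))"

definition mtrace :: "complex ^ 'a ^ 'a \<Rightarrow> complex" where
  "mtrace M = (\<Sum>i\<in>UNIV. M $ i $ i)"

definition hermitian_mat :: "complex ^ 'a ^ 'a \<Rightarrow> bool" where
  "hermitian_mat M \<longleftrightarrow> cadj M = M"

definition unitary_mat :: "complex ^ 'a ^ 'a \<Rightarrow> bool" where
  "unitary_mat U \<longleftrightarrow> cadj U ** U = mat 1"

definition psd_mat :: "complex ^ 'a ^ 'a \<Rightarrow> bool" where
  "psd_mat M \<longleftrightarrow> (\<forall>v :: complex ^ 'a.
     Im (\<Sum>i\<in>UNIV. \<Sum>j\<in>UNIV. cnj (v $ i) * M $ i $ j * v $ j) = 0 \<and>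
     Re (\<Sum>i\<in>UNIV. \<Sum>j\<in>UNIV. cnj (v $ i) * M $ i $ j * v $ j) \<ge> 0)"

definition density_op :: "complex ^ 'a ^ 'a \<Rightarrow> bool" where
  "density_op \<rho> \<longleftrightarrow> hermitian_mat \<rho> \<and> psd_mat \<rho> \<and> mtrace \<rho> = 1"

definition hs_norm :: "complex ^ 'a ^ 'a \<Rightarrow> real" where
  "hs_norm M = sqrt (\<Sum>i\<in>UNIV. \<Sum>j\<in>UNIV. (cmod (M $ i $ j))\<^sup>2)"

definition conj_by :: "complex ^ 'a ^ 'a \<Rightarrow> complex ^ 'a ^ 'a \<Rightarrow> complex ^ 'a ^ 'a" where
  "conj_by W A = W ** A ** cadj W"

text \<open>Single-qubit Pauli matrices (basis False = |0>, True = |1>).\<close>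
datatype pauli = PI | PX | PY | PZ

instance pauli :: finite
proof
  have "(UNIV :: pauli set) = {PI, PX, PY, PZ}" by (auto intro: pauli.exhaust)
  then show "finite (UNIV :: pauli set)" by (metis finite.emptyI finite_insert)
qed

fun sigma :: "pauli \<Rightarrow> bool \<Rightarrow> bool \<Rightarrow> complex" where
  "sigma PI a b = (if a = b then 1 else 0)"
| "sigma PX a b = (if a = b then 0 else 1)"
| "sigma PY a b = (if a = b then 0 else if a then \<i> else - \<i>)"
| "sigma PZ a b = (if a = b then (if a then -1 else 1) else 0)"

definition pauli_mat :: "('n::finite \<Rightarrow> pauli) \<Rightarrow> 'n op" where
  "pauli_mat P = (\<chi> x y. \<Prod>k\<in>UNIV. sigma (P k) (x k) (y k))"

text \<open>\<Xi>_{A,B}(P) = tr(AP)tr(BP) and \<tilde>\<Xi>_{A,B}(P) = tr(APBP), as real vectors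
  (for Hermitian A, B these traces/products are real; we take real parts).\<close>
definition Xi :: "'n::finite op \<Rightarrow> 'n op \<Rightarrow> ('n \<Rightarrow> pauli) \<Rightarrow> real" where
  "Xi A B P = Re (mtrace (A ** pauli_mat P) * mtrace (B ** pauli_mat P))"

definition Xit :: "'n::finite op \<Rightarrow> 'n op \<Rightarrow> ('n \<Rightarrow> pauli) \<Rightarrow> real" where
  "Xit A B P = Re (mtrace (A ** pauli_mat P ** B ** pauli_mat P))"

definition vnorm2 :: "(('n::finite \<Rightarrow> pauli) \<Rightarrow> real) \<Rightarrow> real" where
  "vnorm2 f = (\<Sum>P\<in>UNIV. (f P)\<^sup>2)"

definition vdot :: "(('n::finite \<Rightarrow> pauli) \<Rightarrow> real) \<Rightarrow> (('n \<Rightarrow> pauli) \<Rightarrow> real) \<Rightarrow> real" where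
  "vdot f g = (\<Sum>P\<in>UNIV. f P * g P)"

text \<open>Haar probability measure on U(d): a probability measure on the Borel sets of
  d x d complex matrices, concentrated on unitaries, invariant under left multiplication
  by any unitary. (Such a measure exists and is unique.)\<close>
definition haar_measure :: "(complex ^ 'a ^ 'a) measure \<Rightarrow> bool" where
  "haar_measure \<mu> \<longleftrightarrow> prob_space \<mu> \<and> sets \<mu> = sets borel \<and>
     (AE W in \<mu>. unitary_mat W) \<and>
     (\<forall>V. unitary_mat V \<longrightarrow> distr \<mu> borel (\<lambda>W. V ** W) = \<mu>)"

end

theory Submission
  imports Defs "HOL-Library.Cardinality" "HOL-Combinatorics.Transposition"
begin

text \<open>For Haar-random \<open>W\<close>, the tensor \<open>G\<^sub>i\<^sub>j\<^sub>k\<^sub>l = \<bbbE> (W M W\<^sup>\<dagger>)\<^sub>i\<^sub>j (W M W\<^sup>\<dagger>)\<^sub>k\<^sub>l\<close> is invariant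
  under the action of every unitary on its four indices. Testing this invariance with diagonal
  phases, permutation matrices and a rotation in a coordinate plane forces
  \<open>G\<^sub>i\<^sub>j\<^sub>k\<^sub>l = b \<delta>\<^sub>i\<^sub>j \<delta>\<^sub>k\<^sub>l + e \<delta>\<^sub>i\<^sub>l \<delta>\<^sub>j\<^sub>k\<close>, and the two contractions \<open>tr(M)\<^sup>2\<close> and \<open>tr(M\<^sup>2)\<close>,
  which do not depend on \<open>W\<close>, determine \<open>b\<close> and \<open>e\<close>. Hence
  \<open>\<bbbE> tr(W M W\<^sup>\<dagger> A) tr(W M W\<^sup>\<dagger> B) = \<beta>(M) tr A tr B + \<epsilon>(M) tr(A B)\<close>.

  Each of the six quantities is a sum over Pauli strings \<open>P\<close> of such second moments, with
  \<open>M = \<rho>\<close> or \<open>M = O\<close> (using \<open>tr(\<rho> O') = tr(O' \<rho>)\<close> and the symmetry of \<open>\<Xi>\<close> and \<open>\<tilde>\<Xi>\<close>).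
  The sums collapse by \<open>P\<^sup>2 = 1\<close>, \<open>tr P = d [P = I]\<close> and the completeness relation
  \<open>\<Sum>\<^sub>P tr(A P) tr(B P) = d tr(A B)\<close>.\<close>

lemma matrix_mult_nth: "(A ** B) $ i $ j = (\<Sum>k\<in>UNIV. A $ i $ k * B $ k $ j)"
  by (simp add: matrix_matrix_mult_def)

lemma mat_one_nth: "(mat 1 :: 'a::{zero,one}^'n^'n) $ i $ j = (if i = j then 1 else 0)"
  by (simp add: mat_def)

lemma sum_UNIV_eq_single:
  "(\<And>a. a \<noteq> p \<Longrightarrow> f a = 0) \<Longrightarrow> (\<Sum>a\<in>(UNIV::'a::finite set). f a) = f p"
  by (subst sum.mono_neutral_cong_right[of UNIV "{p}" f f]) auto

lemma sum_UNIV_eq_pair: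
  "p \<noteq> q \<Longrightarrow> (\<And>a. a \<noteq> p \<Longrightarrow> a \<noteq> q \<Longrightarrow> f a = 0) \<Longrightarrow>
   (\<Sum>a\<in>(UNIV::'a::finite set). f a) = f p + f q"
  by (subst sum.mono_neutral_cong_right[of UNIV "{p,q}" f f]) auto

lemma cadj_nth [simp]: "cadj M $ i $ j = cnj (M $ j $ i)"
  by (simp add: cadj_def)

lemma cadj_cadj [simp]: "cadj (cadj M) = M"
  by (simp add: cadj_def vec_eq_iff)

lemma cadj_mult: "cadj (A ** B) = cadj B ** cadj A"
  by (simp add: vec_eq_iff matrix_mult_nth mult.commute)

lemma unitary_matI:
  "(\<And>x y. (\<Sum>k\<in>UNIV. cnj (V $ k $ x) * V $ k $ y) = (if x = y then 1 else 0)) \<Longrightarrow> unitary_mat V"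
  unfolding unitary_mat_def by (simp add: vec_eq_iff matrix_mult_nth mat_one_nth)

lemma norm_unitary_nth_le:
  assumes "unitary_mat W"
  shows "cmod (W $ i $ j) \<le> 1"
proof -
  have "(cadj W ** W) $ j $ j = 1"
    using assms by (simp add: unitary_mat_def mat_one_nth)
  then have "(\<Sum>k\<in>UNIV. cnj (W $ k $ j) * W $ k $ j) = 1"
    by (simp add: matrix_mult_nth)
  moreover have "cnj (W $ k $ j) * W $ k $ j = of_real ((cmod (W $ k $ j))\<^sup>2)" for k
    by (subst complex_norm_square) (rule mult.commute)
  ultimately have "(\<Sum>k\<in>UNIV. (cmod (W $ k $ j))\<^sup>2) = 1"
    by (metis (no_types, lifting) of_real_eq_1_iff of_real_sum sum.cong)
  moreover have "(cmod (W $ i $ j))\<^sup>2 \<le> (\<Sum>k\<in>UNIV. (cmod (W $ k $ j))\<^sup>2)"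
    by (rule member_le_sum) auto
  ultimately show ?thesis
    by (simp add: power_le_one_iff abs_square_le_1)
qed

lemma mtrace_mult_commute: "mtrace (A ** B) = mtrace (B ** A)"
  unfolding mtrace_def matrix_mult_nth by (subst sum.swap) (simp add: mult.commute)

lemma mtrace_mat_one: "mtrace (mat 1 :: complex^'a::finite^'a) = of_nat CARD('a)"
  by (simp add: mtrace_def mat_one_nth)

lemma mtrace_hermitian_real:
  assumes "hermitian_mat M"
  shows "mtrace M \<in> \<real>"
proof -
  have "cnj (mtrace M) = mtrace (cadj M)"
    by (simp add: mtrace_def)
  then show ?thesis
    using assms by (simp add: hermitian_mat_def Reals_cnj_iff)
qed

lemma mtrace_mult_hermitian_real:
  assumes "hermitian_mat A" "hermitian_mat B"
  shows "mtrace (A ** B) \<in> \<real>"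
proof -
  have "cnj (mtrace (A ** B)) = mtrace (cadj B ** cadj A)"
    unfolding mtrace_def matrix_mult_nth by (simp add: mult.commute)
  also have "\<dots> = mtrace (A ** B)"
    using assms mtrace_mult_commute unfolding hermitian_mat_def by metis
  finally show ?thesis by (simp add: Reals_cnj_iff)
qed

lemma Re_mult_Reals: "z \<in> \<real> \<Longrightarrow> w \<in> \<real> \<Longrightarrow> Re (z * w) = Re z * Re w"
  by (auto elim!: Reals_cases)

lemma hermitian_conj_by: "hermitian_mat M \<Longrightarrow> hermitian_mat (conj_by W M)"
  by (simp add: hermitian_mat_def conj_by_def cadj_mult matrix_mul_assoc)

lemma hermitian_sandwich: "hermitian_mat P \<Longrightarrow> hermitian_mat M \<Longrightarrow> hermitian_mat (P ** M ** P)"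
  by (simp add: hermitian_mat_def cadj_mult matrix_mul_assoc)

lemma conj_by_mult: "conj_by (V ** W) M = conj_by V (conj_by W M)"
  by (simp add: conj_by_def cadj_mult matrix_mul_assoc)

lemma conj_by_nth: "conj_by W M $ i $ j = (\<Sum>a\<in>UNIV. W $ i $ a * (\<Sum>b\<in>UNIV. cnj (W $ j $ b) * M $ a $ b))"
  by (simp add: conj_by_def matrix_mult_nth sum_distrib_left sum_distrib_right mult_ac)
    (rule sum.swap)

lemma mtrace_conj_by:
  assumes "unitary_mat W"
  shows "mtrace (conj_by W M) = mtrace M"
  using assms unfolding conj_by_def unitary_mat_def
  by (metis matrix_mul_assoc matrix_mul_lid mtrace_mult_commute)

lemma conj_by_mult_conj_by:
  assumes "unitary_mat W"
  shows "conj_by W A ** conj_by W B = conj_by W (A ** B)"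
  using assms unfolding conj_by_def unitary_mat_def by (metis matrix_mul_assoc matrix_mul_lid)

lemma hs_norm_sq_hermitian:
  assumes "hermitian_mat M"
  shows "(hs_norm M)\<^sup>2 = Re (mtrace (M ** M))"
proof -
  have "mtrace (M ** M) = (\<Sum>i\<in>UNIV. \<Sum>j\<in>UNIV. M $ i $ j * cnj (M $ i $ j))"
    using assms unfolding hermitian_mat_def mtrace_def matrix_mult_nth
    by (intro sum.cong refl) (metis cadj_nth)
  also have "\<dots> = (\<Sum>i\<in>UNIV. \<Sum>j\<in>UNIV. of_real ((cmod (M $ i $ j))\<^sup>2))"
    by (simp only: complex_norm_square)
  finally show ?thesis
    unfolding hs_norm_def by (simp add: sum_nonneg)
qed

lemma mtrace_mult_mult_expand:
  "mtrace (Y ** A) * mtrace (Y ** B) =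
     (\<Sum>i\<in>UNIV. \<Sum>j\<in>UNIV. \<Sum>k\<in>UNIV. \<Sum>l\<in>UNIV. (A$j$i * B$l$k) * (Y$i$j * Y$k$l))"
proof -
  have "mtrace (Y ** A) * mtrace (Y ** B) = (\<Sum>i\<in>UNIV. \<Sum>j\<in>UNIV. (Y$i$j * A$j$i) * mtrace (Y ** B))"
    unfolding mtrace_def matrix_mult_nth by (simp only: sum_distrib_right)
  also have "\<dots> = (\<Sum>i\<in>UNIV. \<Sum>j\<in>UNIV. \<Sum>k\<in>UNIV. \<Sum>l\<in>UNIV. (A$j$i * B$l$k) * (Y$i$j * Y$k$l))"
    unfolding mtrace_def matrix_mult_nth by (simp add: sum_distrib_left mult_ac)
  finally show ?thesis .
qed

lemma sum_nested_mult_mult: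
  "(\<Sum>a\<in>UNIV. f1 a * (\<Sum>b\<in>UNIV. f2 b * Y a b)) * (\<Sum>c\<in>UNIV. f3 c * (\<Sum>d\<in>UNIV. f4 d * Y c d))
   = (\<Sum>a\<in>UNIV. f1 a * (\<Sum>b\<in>UNIV. f2 b *
       (\<Sum>c\<in>UNIV. f3 c * (\<Sum>d\<in>UNIV. f4 d * (Y a b * Y c d :: complex)))))"
proof -
  define R where "R = (\<Sum>c\<in>UNIV. f3 c * (\<Sum>d\<in>UNIV. f4 d * Y c d))"
  have "Y a b * R = (\<Sum>c\<in>UNIV. f3 c * (\<Sum>d\<in>UNIV. f4 d * (Y a b * Y c d)))" for a b
    unfolding R_def by (simp add: sum_distrib_left mult_ac)
  then show ?thesis
    unfolding R_def[symmetric] by (simp add: sum_distrib_right mult.assoc)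
qed

section \<open>Pauli strings\<close>

lemma UNIV_pauli: "(UNIV :: pauli set) = {PI, PX, PY, PZ}"
  by (auto intro: pauli.exhaust)

lemma sum_fun_prod:
  fixes f :: "'a::finite \<Rightarrow> 'b::finite \<Rightarrow> 'c::comm_semiring_1"
  shows "(\<Sum>x\<in>UNIV. \<Prod>k\<in>UNIV. f k (x k)) = (\<Prod>k\<in>UNIV. \<Sum>b\<in>UNIV. f k b)"
  using prod_sum_PiE[of "UNIV::'a set" "\<lambda>_. UNIV" f] by simp

lemma prod_if_UNIV:
  fixes c :: "'c::comm_semiring_1"
  shows "(\<Prod>k\<in>(UNIV::'a::finite set). if p k then c else 0) = (if \<forall>k. p k then c ^ CARD('a) else 0)"
proof (cases "\<forall>k. p k")
  case False
  then obtain k where "\<not> p k" by blast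
  then show ?thesis using False by (intro trans[OF prod_zero]) auto
qed simp

lemma sigma_mult_self: "(\<Sum>b\<in>UNIV. sigma s a b * sigma s b c) = (if a = c then 1 else 0)"
  by (cases s; cases a; cases c) (simp_all add: UNIV_bool)

lemma cnj_sigma: "cnj (sigma s a b) = sigma s b a"
  by (cases s; cases a; cases b) simp_all

lemma sum_sigma_diag: "(\<Sum>b\<in>UNIV. sigma s b b) = (if s = PI then 2 else 0)"
  by (cases s) (simp_all add: UNIV_bool)

lemma sum_sigma_mult: "(\<Sum>s\<in>UNIV. sigma s a b * sigma s c e) = (if a = e \<and> b = c then 2 else 0)"
  by (cases a; cases b; cases c; cases e) (simp_all add: UNIV_pauli)

lemma pauli_mat_nth: "pauli_mat P $ x $ y = (\<Prod>k\<in>UNIV. sigma (P k) (x k) (y k))"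
  by (simp add: pauli_mat_def)

lemma pauli_mat_mult_self: "pauli_mat P ** pauli_mat P = mat 1"
proof -
  have "(pauli_mat P ** pauli_mat P) $ x $ y = (if x = y then 1 else 0)" for x y
  proof -
    have "(pauli_mat P ** pauli_mat P) $ x $ y
        = (\<Sum>z\<in>UNIV. \<Prod>k\<in>UNIV. sigma (P k) (x k) (z k) * sigma (P k) (z k) (y k))"
      by (simp add: matrix_mult_nth pauli_mat_nth prod.distrib)
    also have "\<dots> = (\<Prod>k\<in>UNIV. \<Sum>b\<in>UNIV. sigma (P k) (x k) b * sigma (P k) b (y k))"
      by (rule sum_fun_prod)
    also have "\<dots> = (if x = y then 1 else 0)"
      by (simp add: sigma_mult_self prod_if_UNIV fun_eq_iff)
    finally show ?thesis .
  qed
  then show ?thesis by (simp add: vec_eq_iff mat_one_nth)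
qed

lemma hermitian_pauli_mat: "hermitian_mat (pauli_mat P)"
  by (simp add: hermitian_mat_def vec_eq_iff pauli_mat_nth cnj_sigma)

lemma mtrace_pauli_mat:
  "mtrace (pauli_mat (P::'n::finite \<Rightarrow> pauli)) = (if P = (\<lambda>_. PI) then 2 ^ CARD('n) else 0)"
proof -
  have "mtrace (pauli_mat P) = (\<Prod>k\<in>UNIV. \<Sum>b\<in>UNIV. sigma (P k) b b)"
    unfolding mtrace_def pauli_mat_nth by (rule sum_fun_prod)
  then show ?thesis
    by (simp add: sum_sigma_diag prod_if_UNIV fun_eq_iff)
qed

lemma pauli_mat_identity: "pauli_mat (\<lambda>_. PI) = mat 1"
  by (simp add: vec_eq_iff pauli_mat_nth mat_one_nth prod_if_UNIV fun_eq_iff)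

lemma sum_pauli_mat_nth_mult:
  "(\<Sum>P\<in>UNIV. pauli_mat (P::'n::finite \<Rightarrow> pauli) $ a $ b * pauli_mat P $ c $ e)
     = (if a = e \<and> b = c then 2 ^ CARD('n) else 0)"
proof -
  have "(\<Sum>P\<in>UNIV. pauli_mat (P::'n \<Rightarrow> pauli) $ a $ b * pauli_mat P $ c $ e)
     = (\<Sum>P\<in>UNIV. \<Prod>k\<in>UNIV. sigma (P k) (a k) (b k) * sigma (P k) (c k) (e k))"
    by (simp add: pauli_mat_nth prod.distrib)
  also have "\<dots> = (\<Prod>k\<in>UNIV. \<Sum>s\<in>UNIV. sigma s (a k) (b k) * sigma s (c k) (e k))"
    by (rule sum_fun_prod)
  finally show ?thesis
    by (simp add: sum_sigma_mult prod_if_UNIV fun_eq_iff)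
qed

lemma sum_pauli_mtrace_mult:
  fixes A B :: "'n::finite op"
  shows "(\<Sum>P\<in>UNIV. mtrace (A ** pauli_mat P) * mtrace (B ** pauli_mat P))
     = 2 ^ CARD('n) * mtrace (A ** B)"
proof -
  have "(\<Sum>P\<in>UNIV. mtrace (A ** pauli_mat P) * mtrace (B ** pauli_mat P))
     = (\<Sum>P\<in>UNIV. \<Sum>x\<in>UNIV. \<Sum>z\<in>UNIV. \<Sum>y\<in>UNIV. \<Sum>w\<in>UNIV.
          A $ x $ y * B $ z $ w * (pauli_mat P $ y $ x * pauli_mat P $ w $ z))"
    unfolding mtrace_def matrix_mult_nth sum_product
    by (intro sum.cong refl) (simp add: sum_distrib_left algebra_simps)
  also have "\<dots> = (\<Sum>x\<in>UNIV. \<Sum>z\<in>UNIV. \<Sum>y\<in>UNIV. \<Sum>w\<in>UNIV.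
          A $ x $ y * B $ z $ w * (\<Sum>P\<in>UNIV. pauli_mat P $ y $ x * pauli_mat P $ w $ z))"
    by (simp add: sum_distrib_left sum.swap[of _ "UNIV::('n\<Rightarrow>pauli) set"])
  also have "\<dots> = (\<Sum>x\<in>UNIV. \<Sum>z\<in>UNIV. \<Sum>y\<in>UNIV. \<Sum>w\<in>UNIV.
          if x = w then if y = z then A $ x $ y * B $ z $ w * 2 ^ CARD('n) else 0 else 0)"
    by (intro sum.cong refl) (simp add: sum_pauli_mat_nth_mult)
  also have "\<dots> = (\<Sum>x\<in>UNIV. \<Sum>z\<in>UNIV. A $ x $ z * B $ z $ x * 2 ^ CARD('n))"
    by (simp only: sum.delta' sum.delta finite UNIV_I if_True)
  finally show ?thesis
    unfolding mtrace_def matrix_mult_nth by (simp add: sum_distrib_left algebra_simps)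
qed

lemma card_qubit_basis: "CARD('n::finite \<Rightarrow> bool) = 2 ^ CARD('n)"
  by (simp add: card_fun)

lemma two_le_card_qubit_basis: "CARD('n::finite \<Rightarrow> bool) \<ge> 2"
  unfolding card_qubit_basis using one_le_power[of 2] power_increasing[of 1 "CARD('n)" "2::nat"]
  by (simp add: Suc_leI)

lemma two_le_two_power_card: "(2::real) \<le> 2 ^ CARD('n::finite)"
  using power_increasing[of 1 "CARD('n)" "2::real"] by (simp add: Suc_leI)

lemma Re_mtrace_pauli_mat:
  "Re (mtrace (pauli_mat (P::'n::finite \<Rightarrow> pauli))) = (if P = (\<lambda>_. PI) then 2 ^ CARD('n) else 0)"
  by (simp add: mtrace_pauli_mat)

lemma Re_mtrace_pauli_mat_mult_self:
  "Re (mtrace (pauli_mat (P::'n::finite \<Rightarrow> pauli) ** pauli_mat P)) = 2 ^ CARD('n)"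
  by (simp add: pauli_mat_mult_self mtrace_mat_one card_qubit_basis)

lemma mtrace_pauli_sandwich:
  "mtrace (pauli_mat P ** C ** pauli_mat P) = mtrace C"
  "mtrace (pauli_mat P ** C ** pauli_mat P ** pauli_mat P) = mtrace (C ** pauli_mat P)"
  by (metis matrix_mul_assoc matrix_mul_lid pauli_mat_mult_self mtrace_mult_commute)
    (metis matrix_mul_assoc matrix_mul_rid pauli_mat_mult_self mtrace_mult_commute)

lemma sum_pauli_Re_mtrace_mult:
  fixes A B :: "'n::finite op"
  assumes "hermitian_mat A" "hermitian_mat B"
  shows "(\<Sum>P\<in>UNIV. Re (mtrace (A ** pauli_mat P)) * Re (mtrace (B ** pauli_mat P)))
       = 2 ^ CARD('n) * Re (mtrace (A ** B))"
proof -
  have "(\<Sum>P\<in>UNIV. Re (mtrace (A ** pauli_mat P)) * Re (mtrace (B ** pauli_mat P)))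
      = (\<Sum>P\<in>UNIV. Re (mtrace (A ** pauli_mat P) * mtrace (B ** pauli_mat P)))"
    using assms
    by (intro sum.cong refl Re_mult_Reals[symmetric] mtrace_mult_hermitian_real hermitian_pauli_mat)
  also have "\<dots> = Re (\<Sum>P\<in>UNIV. mtrace (A ** pauli_mat P) * mtrace (B ** pauli_mat P))"
    by (rule Re_sum[symmetric])
  finally show ?thesis
    by (simp add: sum_pauli_mtrace_mult)
qed

lemma Xi_hermitian:
  assumes "hermitian_mat A" "hermitian_mat B"
  shows "Xi A B P = Re (mtrace (A ** pauli_mat P)) * Re (mtrace (B ** pauli_mat P))"
  unfolding Xi_def using assms
  by (intro Re_mult_Reals mtrace_mult_hermitian_real hermitian_pauli_mat)

lemma Xi_commute: "Xi A B = Xi B A"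
  by (simp add: fun_eq_iff Xi_def mult.commute)

lemma Xit_eq: "Xit A B P = Re (mtrace (A ** (pauli_mat P ** B ** pauli_mat P)))"
  by (simp add: Xit_def matrix_mul_assoc)

lemma Xit_commute: "Xit A B = Xit (B :: 'n::finite op) A"
proof
  fix P :: "'n \<Rightarrow> pauli"
  let ?P = "pauli_mat P"
  have "mtrace (A ** ?P ** B ** ?P) = mtrace ((?P ** A ** ?P) ** B)"
    by (metis matrix_mul_assoc mtrace_mult_commute)
  then show "Xit A B P = Xit B A P"
    unfolding Xit_def by (metis matrix_mul_assoc mtrace_mult_commute)
qed

section \<open>Unitarily invariant four-index tensors\<close>

definition unitarily_invariant :: "('a::finite \<Rightarrow> 'a \<Rightarrow> 'a \<Rightarrow> 'a \<Rightarrow> complex) \<Rightarrow> bool" where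
  "unitarily_invariant G \<longleftrightarrow> (\<forall>V::complex^'a^'a. unitary_mat V \<longrightarrow> (\<forall>i j k l. G i j k l =
     (\<Sum>a\<in>UNIV. V$i$a * (\<Sum>b\<in>UNIV. cnj (V$j$b) *
       (\<Sum>c\<in>UNIV. V$k$c * (\<Sum>d\<in>UNIV. cnj (V$l$d) * G a b c d))))))"

lemma unitarily_invariantD:
  "unitarily_invariant G \<Longrightarrow> unitary_mat V \<Longrightarrow> G i j k l =
     (\<Sum>a\<in>UNIV. V$i$a * (\<Sum>b\<in>UNIV. cnj (V$j$b) *
       (\<Sum>c\<in>UNIV. V$k$c * (\<Sum>d\<in>UNIV. cnj (V$l$d) * G a b c d))))"
  unfolding unitarily_invariant_def by blast

definition diag_mat :: "('a::finite \<Rightarrow> complex) \<Rightarrow> complex^'a^'a" where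
  "diag_mat u = (\<chi> x a. if x = a then u x else 0)"

lemma unitary_diag_mat:
  assumes "\<And>x. cmod (u x) = 1"
  shows "unitary_mat (diag_mat u)"
proof (rule unitary_matI)
  fix x y
  have "cnj (u x) * u x = 1"
    using complex_norm_square[of "u x"] assms by (simp add: mult.commute)
  then show "(\<Sum>k\<in>UNIV. cnj (diag_mat u $ k $ x) * diag_mat u $ k $ y) = (if x = y then 1 else 0)"
    by (subst sum_UNIV_eq_single[of x]) (auto simp: diag_mat_def)
qed

lemma sum_diag_mat_row: "(\<Sum>a\<in>UNIV. diag_mat u $ x $ a * F a) = u x * F x"
  by (subst sum_UNIV_eq_single[of x]) (auto simp: diag_mat_def)

lemma sum_cnj_diag_mat_row: "(\<Sum>a\<in>UNIV. cnj (diag_mat u $ x $ a) * F a) = cnj (u x) * F x"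
  by (subst sum_UNIV_eq_single[of x]) (auto simp: diag_mat_def)

text \<open>A phase \<open>\<i>\<close> on the single basis vector \<open>m\<close> multiplies \<open>G i j k l\<close> by
  \<open>\<i>\<close> to the number of occurrences of \<open>m\<close> among \<open>i, k\<close> minus that among \<open>j, l\<close>.\<close>

lemma unitarily_invariant_support:
  fixes G :: "'a::finite \<Rightarrow> 'a \<Rightarrow> 'a \<Rightarrow> 'a \<Rightarrow> complex"
  assumes "unitarily_invariant G" "G i j k l \<noteq> 0"
  shows "(i = j \<and> k = l) \<or> (i = l \<and> j = k)"
proof -
  define u :: "'a \<Rightarrow> 'a \<Rightarrow> complex" where "u m x = (if x = m then \<i> else 1)" for m x
  have "G i j k l = u m i * (cnj (u m j) * (u m k * (cnj (u m l) * G i j k l)))" for m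
    using unitarily_invariantD[OF assms(1) unitary_diag_mat, of "u m"]
    by (simp only: sum_diag_mat_row sum_cnj_diag_mat_row) (simp add: u_def)
  then have "u m i * cnj (u m j) * u m k * cnj (u m l) = 1" for m
    using assms(2) by (metis (no_types, lifting) mult.assoc mult_cancel_right1)
  from this[of i] this[of k] show ?thesis
    unfolding u_def
    by (cases "j = i"; cases "l = i"; cases "k = i"; cases "j = k"; cases "l = k") simp_all
qed

definition perm_mat :: "('a::finite \<Rightarrow> 'a) \<Rightarrow> complex^'a^'a" where
  "perm_mat \<pi> = (\<chi> x a. if a = \<pi> x then 1 else 0)"

lemma unitary_perm_mat:
  assumes "bij \<pi>"
  shows "unitary_mat (perm_mat \<pi>)"
proof (rule unitary_matI)
  fix x y
  show "(\<Sum>k\<in>UNIV. cnj (perm_mat \<pi> $ k $ x) * perm_mat \<pi> $ k $ y) = (if x = y then 1 else 0)"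
    using assms by (subst sum_UNIV_eq_single[of "inv \<pi> x"])
      (auto simp: perm_mat_def bij_inv_eq_iff bij_is_surj surj_f_inv_f)
qed

lemma sum_perm_mat_row: "(\<Sum>a\<in>UNIV. perm_mat \<pi> $ x $ a * F a) = F (\<pi> x)"
  by (subst sum_UNIV_eq_single[of "\<pi> x"]) (auto simp: perm_mat_def)

lemma sum_cnj_perm_mat_row: "(\<Sum>a\<in>UNIV. cnj (perm_mat \<pi> $ x $ a) * F a) = F (\<pi> x)"
  by (subst sum_UNIV_eq_single[of "\<pi> x"]) (auto simp: perm_mat_def)

lemma unitarily_invariant_perm:
  assumes "unitarily_invariant G" "bij \<pi>"
  shows "G i j k l = G (\<pi> i) (\<pi> j) (\<pi> k) (\<pi> l)"
  using unitarily_invariantD[OF assms(1) unitary_perm_mat[OF assms(2)], of i j k l]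
  by (simp only: sum_perm_mat_row sum_cnj_perm_mat_row)

lemma exists_bij_pair:
  assumes "i \<noteq> k" "i' \<noteq> k'"
  shows "\<exists>\<pi>::'a \<Rightarrow> 'a. bij \<pi> \<and> \<pi> i = i' \<and> \<pi> k = k'"
proof -
  define m where "m = Transposition.transpose i i' k"
  have "m \<noteq> i'"
    using assms(1) unfolding m_def by (auto simp: Transposition.transpose_def)
  then show ?thesis
    using assms(2)
    by (intro exI[of _ "Transposition.transpose m k' \<circ> Transposition.transpose i i'"])
      (auto simp: bij_comp m_def)
qed

definition inv_sqrt2 :: complex where
  "inv_sqrt2 = complex_of_real (1 / sqrt 2)"

lemma inv_sqrt2_sq: "inv_sqrt2 * inv_sqrt2 = 1 / 2"
  by (simp add: inv_sqrt2_def flip: of_real_mult)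

lemma cnj_inv_sqrt2 [simp]: "cnj inv_sqrt2 = inv_sqrt2"
  by (simp add: inv_sqrt2_def)

definition hadamard_mat :: "'a::finite \<Rightarrow> 'a \<Rightarrow> complex^'a^'a" where
  "hadamard_mat p q = (\<chi> x a.
      if x = p then (if a = p \<or> a = q then inv_sqrt2 else 0)
      else if x = q then (if a = p then inv_sqrt2 else if a = q then - inv_sqrt2 else 0)
      else (if a = x then 1 else 0))"

lemma unitary_hadamard_mat:
  assumes "p \<noteq> q"
  shows "unitary_mat (hadamard_mat p q)"
proof (rule unitary_matI)
  fix x y
  show "(\<Sum>k\<in>UNIV. cnj (hadamard_mat p q $ k $ x) * hadamard_mat p q $ k $ y) = (if x = y then 1 else 0)"
  proof (cases "x = p \<or> x = q")
    case True
    then show ?thesis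
      using assms by (subst sum_UNIV_eq_pair[OF assms])
        (auto simp: hadamard_mat_def inv_sqrt2_sq)
  next
    case False
    then show ?thesis
      by (subst sum_UNIV_eq_single[of x]) (auto simp: hadamard_mat_def)
  qed
qed

lemma sum_hadamard_mat_row:
  "p \<noteq> q \<Longrightarrow> (\<Sum>a\<in>UNIV. hadamard_mat p q $ p $ a * F a) = inv_sqrt2 * F p + inv_sqrt2 * F q"
  by (subst sum_UNIV_eq_pair[of p q]) (auto simp: hadamard_mat_def)

lemma sum_cnj_hadamard_mat_row:
  "p \<noteq> q \<Longrightarrow> (\<Sum>a\<in>UNIV. cnj (hadamard_mat p q $ p $ a) * F a) = inv_sqrt2 * F p + inv_sqrt2 * F q"
  by (subst sum_UNIV_eq_pair[of p q]) (auto simp: hadamard_mat_def)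

text \<open>Invariance under the rotation in the plane of \<open>p, q\<close> expresses \<open>G p p p p\<close> as the
  average of all entries with indices in \<open>{p, q}\<close>; only six of them survive.\<close>

lemma unitarily_invariant_diag_split:
  assumes G: "unitarily_invariant G" and pq: "p \<noteq> q"
  shows "G p p p p = G p p q q + G p q q p"
proof -
  have zero: "G a b c d = 0" if "\<not> ((a = b \<and> c = d) \<or> (a = d \<and> b = c))" for a b c d
    using unitarily_invariant_support[OF G] that by blast
  have swap: "G q q q q = G p p p p" "G q q p p = G p p q q" "G q p p q = G p q q p"
    using unitarily_invariant_perm[OF G bij_transpose[of p q], of p p p p]
      unitarily_invariant_perm[OF G bij_transpose[of p q], of p p q q]
      unitarily_invariant_perm[OF G bij_transpose[of p q], of p q q p] by simp_all
  let ?r = inv_sqrt2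
  have "G p p p p
     = ?r * (?r * (?r * (?r * G p p p p + ?r * G p p p q) + ?r * (?r * G p p q p + ?r * G p p q q))
       + ?r * (?r * (?r * G p q p p + ?r * G p q p q) + ?r * (?r * G p q q p + ?r * G p q q q)))
     + ?r * (?r * (?r * (?r * G q p p p + ?r * G q p p q) + ?r * (?r * G q p q p + ?r * G q p q q))
       + ?r * (?r * (?r * G q q p p + ?r * G q q p q) + ?r * (?r * G q q q p + ?r * G q q q q)))"
    using unitarily_invariantD[OF G unitary_hadamard_mat[OF pq], of p p p p]
    by (simp only: sum_hadamard_mat_row[OF pq] sum_cnj_hadamard_mat_row[OF pq])
  also have "\<dots> = (?r * ?r) * (?r * ?r) * (2 * G p p p p + 2 * G p p q q + 2 * G p q q p)"
    using pq by (simp add: zero swap algebra_simps)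
  finally have "2 * G p p p p = 2 * (G p p q q + G p q q p)"
    by (simp add: inv_sqrt2_sq field_simps)
  then show ?thesis
    by (metis mult_cancel_left zero_neq_numeral)
qed

lemma unitarily_invariant_values:
  assumes G: "unitarily_invariant G" and ik0: "i0 \<noteq> k0"
  shows "G i i i i = G i0 i0 k0 k0 + G i0 k0 k0 i0"
    and "i \<noteq> k \<Longrightarrow> G i i k k = G i0 i0 k0 k0"
    and "i \<noteq> k \<Longrightarrow> G i k k i = G i0 k0 k0 i0"
proof -
  have "G i i i i = G i0 i0 i0 i0"
    using unitarily_invariant_perm[OF G bij_transpose[of i i0], of i i i i] by simp
  then show "G i i i i = G i0 i0 k0 k0 + G i0 k0 k0 i0"
    using unitarily_invariant_diag_split[OF G ik0] by simp
next
  assume "i \<noteq> k"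
  then obtain \<pi> where \<pi>: "bij \<pi>" "\<pi> i = i0" "\<pi> k = k0"
    using exists_bij_pair[OF _ ik0] by blast
  show "G i i k k = G i0 i0 k0 k0" "G i k k i = G i0 k0 k0 i0"
    using unitarily_invariant_perm[OF G \<pi>(1), of i i k k]
      unitarily_invariant_perm[OF G \<pi>(1), of i k k i] \<pi>(2,3) by simp_all
qed

lemma unitarily_invariant_eq:
  assumes G: "unitarily_invariant G" and ik0: "i0 \<noteq> k0"
  shows "G i j k l = (if i = j \<and> k = l then G i0 i0 k0 k0 else 0)
                   + (if i = l \<and> j = k then G i0 k0 k0 i0 else 0)"
proof -
  note diag = unitarily_invariant_values(1)[OF G ik0]
    and pair = unitarily_invariant_values(2,3)[OF G ik0]
  show ?thesis
  proof (cases "i = j \<and> k = l")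
    case True
    then have "j = i" "l = k" by simp_all
    show ?thesis
    proof (cases "i = k")
      case True
      then show ?thesis
        unfolding \<open>j = i\<close> \<open>l = k\<close> using diag[of k] by simp
    next
      case False
      then show ?thesis
        unfolding \<open>j = i\<close> \<open>l = k\<close> using pair(1)[OF False] by simp
    qed
  next
    case not_paired: False
    show ?thesis
    proof (cases "i = l \<and> j = k")
      case True
      then have "l = i" "j = k" by simp_all
      with not_paired have "i \<noteq> k" by simp
      then show ?thesis
        unfolding \<open>l = i\<close> \<open>j = k\<close> using pair(2)[OF \<open>i \<noteq> k\<close>] by simp
    next
      case False
      with not_paired have "G i j k l = 0"
        using unitarily_invariant_support[OF G, of i j k l] by argo
      then show ?thesis
        by (simp only: not_paired False if_False add_0)
    qed
  qed
qed

lemma sum_isotropic_tensor_contract: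
  fixes A B :: "'a::comm_ring_1^'n::finite^'n"
  shows "(\<Sum>i\<in>UNIV. \<Sum>j\<in>UNIV. \<Sum>k\<in>UNIV. \<Sum>l\<in>UNIV. (A$j$i * B$l$k) *
            ((if i = j \<and> k = l then b else 0) + (if i = l \<and> j = k then e else 0)))
       = b * (\<Sum>i\<in>UNIV. A$i$i) * (\<Sum>k\<in>UNIV. B$k$k) + e * (\<Sum>i\<in>UNIV. \<Sum>j\<in>UNIV. A$i$j * B$j$i)"
proof -
  have "(\<Sum>i\<in>UNIV. \<Sum>j\<in>UNIV. \<Sum>k\<in>UNIV. \<Sum>l\<in>UNIV. (A$j$i * B$l$k) *
            ((if i = j \<and> k = l then b else 0) + (if i = l \<and> j = k then e else 0)))
    = (\<Sum>i\<in>UNIV. \<Sum>j\<in>UNIV. \<Sum>k\<in>UNIV. \<Sum>l\<in>UNIV.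
         (if l = k then if j = i then b * (A$j$i * B$l$k) else 0 else 0)
       + (if l = i then if k = j then e * (A$j$i * B$l$k) else 0 else 0))"
    by (intro sum.cong refl) (auto simp: algebra_simps)
  also have "\<dots> = (\<Sum>i\<in>UNIV. \<Sum>k\<in>UNIV. b * (A$i$i * B$k$k)) + (\<Sum>i\<in>UNIV. \<Sum>j\<in>UNIV. e * (A$j$i * B$i$j))"
  proof -
    have pull: "(\<Sum>k\<in>K. if P then f k else 0) = (if P then sum f K else 0)" for P f and K :: "'n set"
      by simp
    show ?thesis
      by (simp only: sum.distrib sum.delta sum.delta' finite UNIV_I if_True pull)
  qed
  finally show ?thesis
    by (simp add: sum_distrib_left sum_product mult_ac) (rule sum.swap)
qed

section \<open>Second moments of the Haar measure\<close>

lemma haar_measureD: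
  assumes "haar_measure \<mu>"
  shows "prob_space \<mu>" "sets \<mu> = sets borel" "AE W in \<mu>. unitary_mat W"
    and "unitary_mat V \<Longrightarrow> distr \<mu> borel (\<lambda>W. V ** W) = \<mu>"
  using assms unfolding haar_measure_def by auto

lemma haar_measurable:
  fixes f :: "complex^'a::finite^'a \<Rightarrow> 'b::topological_space"
  assumes "haar_measure \<mu>" "continuous_on UNIV f"
  shows "f \<in> borel_measurable \<mu>"
proof -
  have "measurable \<mu> borel = measurable borel (borel :: 'b measure)"
    by (rule measurable_cong_sets[OF haar_measureD(2)[OF assms(1)] refl])
  then show ?thesis
    using borel_measurable_continuous_onI[OF assms(2)] by simp
qed

lemma continuous_on_conj_by_nth:
  "continuous_on UNIV (\<lambda>W::complex^'a::finite^'a. conj_by W M $ i $ j)"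
  unfolding conj_by_nth by (intro continuous_intros)

lemma continuous_on_matrix_mult_left:
  "continuous_on UNIV (\<lambda>W::complex^'a::finite^'a. V ** W)"
  by (intro continuous_at_imp_continuous_on ballI)
    (simp add: isCont_def matrix_mult_nth vec_tendstoI tendsto_intros)

lemma continuous_on_mtrace_conj_by_mult_right:
  "continuous_on UNIV (\<lambda>W::complex^'a::finite^'a. mtrace (conj_by W M ** A))"
  unfolding mtrace_def matrix_mult_nth by (intro continuous_intros continuous_on_conj_by_nth)

lemma continuous_on_mtrace_conj_by_mult:
  "continuous_on UNIV (\<lambda>W::complex^'a::finite^'a. mtrace (conj_by W M ** conj_by W N))"
  unfolding mtrace_def matrix_mult_nth by (intro continuous_intros continuous_on_conj_by_nth)

lemma norm_conj_by_nth_le: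
  assumes "unitary_mat W"
  shows "cmod (conj_by W M $ i $ j) \<le> (\<Sum>a\<in>UNIV. \<Sum>b\<in>UNIV. cmod (M $ a $ b))"
proof -
  have "cmod (conj_by W M $ i $ j) \<le> (\<Sum>a\<in>UNIV. \<Sum>b\<in>UNIV. cmod (W$i$a * (cnj (W$j$b) * M$a$b)))"
    unfolding conj_by_nth sum_distrib_left by (rule order_trans[OF norm_sum sum_mono[OF norm_sum]])
  also have "\<dots> = (\<Sum>a\<in>UNIV. \<Sum>b\<in>UNIV. cmod (W$i$a) * (cmod (W$j$b) * cmod (M$a$b)))"
    by (simp add: norm_mult)
  also have "\<dots> \<le> (\<Sum>a\<in>UNIV. \<Sum>b\<in>UNIV. 1 * (1 * cmod (M $ a $ b)))"
    using norm_unitary_nth_le[OF assms] by (intro sum_mono mult_mono) auto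
  finally show ?thesis by simp
qed

lemma haar_integrable_conj_by_nth_mult:
  fixes M :: "complex^'a::finite^'a"
  assumes "haar_measure \<mu>"
  shows "integrable \<mu> (\<lambda>W. conj_by W M $ i $ j * conj_by W M $ k $ l)"
proof -
  interpret prob_space \<mu>
    using haar_measureD(1)[OF assms] .
  define C where "C = (\<Sum>a\<in>UNIV. \<Sum>b\<in>UNIV. cmod (M $ a $ b))"
  have "AE W in \<mu>. norm (conj_by W M $ i $ j * conj_by W M $ k $ l) \<le> C * C"
    using haar_measureD(3)[OF assms]
    by eventually_elim (simp add: norm_mult C_def mult_mono norm_conj_by_nth_le sum_nonneg)
  moreover have "(\<lambda>W. conj_by W M $ i $ j * conj_by W M $ k $ l) \<in> borel_measurable \<mu>"
    by (intro haar_measurable[OF assms] continuous_intros continuous_on_conj_by_nth)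
  ultimately show ?thesis
    by (intro integrable_const_bound)
qed

lemma haar_integral_eq_const:
  fixes f :: "complex^'a::finite^'a \<Rightarrow> complex"
  assumes "haar_measure \<mu>" "continuous_on UNIV f" "\<And>W. unitary_mat W \<Longrightarrow> f W = c"
  shows "integral\<^sup>L \<mu> f = c"
proof -
  interpret prob_space \<mu>
    using haar_measureD(1)[OF assms(1)] .
  have "integral\<^sup>L \<mu> f = (\<integral>W. c \<partial>\<mu>)"
    using haar_measureD(3)[OF assms(1)] assms(3)
    by (intro integral_cong_AE haar_measurable[OF assms(1,2)]) auto
  then show ?thesis
    by (simp add: prob_space)
qed

definition haar_moment_tensor ::
    "(complex^'a^'a) measure \<Rightarrow> complex^'a^'a \<Rightarrow> 'a::finite \<Rightarrow> 'a \<Rightarrow> 'a \<Rightarrow> 'a \<Rightarrow> complex" where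
  "haar_moment_tensor \<mu> M i j k l = (\<integral>W. conj_by W M $ i $ j * conj_by W M $ k $ l \<partial>\<mu>)"

lemma integral_sum_conj_by_nth_mult:
  fixes M :: "complex^'a::finite^'a"
  assumes "haar_measure \<mu>"
  shows "(\<integral>W. (\<Sum>i\<in>UNIV. \<Sum>j\<in>UNIV. \<Sum>k\<in>UNIV. \<Sum>l\<in>UNIV.
            c i j k l * (conj_by W M $ i $ j * conj_by W M $ k $ l)) \<partial>\<mu>)
       = (\<Sum>i\<in>UNIV. \<Sum>j\<in>UNIV. \<Sum>k\<in>UNIV. \<Sum>l\<in>UNIV. c i j k l * haar_moment_tensor \<mu> M i j k l)"
  using haar_integrable_conj_by_nth_mult[OF assms]
  by (simp add: haar_moment_tensor_def integrable_sum integrable_mult_right)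

lemma haar_integrable_mtrace_mult:
  fixes M :: "complex^'a::finite^'a"
  assumes "haar_measure \<mu>"
  shows "integrable \<mu> (\<lambda>W. mtrace (conj_by W M ** A) * mtrace (conj_by W M ** B))"
  unfolding mtrace_mult_mult_expand
  by (simp add: integrable_sum integrable_mult_right haar_integrable_conj_by_nth_mult[OF assms])

lemma integral_mtrace_conj_by_mult:
  fixes M :: "complex^'a::finite^'a"
  assumes "haar_measure \<mu>"
  shows "(\<integral>W. mtrace (conj_by W M ** A) * mtrace (conj_by W M ** B) \<partial>\<mu>)
       = (\<Sum>i\<in>UNIV. \<Sum>j\<in>UNIV. \<Sum>k\<in>UNIV. \<Sum>l\<in>UNIV. (A$j$i * B$l$k) * haar_moment_tensor \<mu> M i j k l)"
  unfolding mtrace_mult_mult_expand by (rule integral_sum_conj_by_nth_mult[OF assms])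

lemma unitarily_invariant_haar_moment_tensor:
  fixes M :: "complex^'a::finite^'a"
  assumes haar: "haar_measure \<mu>"
  shows "unitarily_invariant (haar_moment_tensor \<mu> M)"
  unfolding unitarily_invariant_def
proof (intro allI impI)
  fix V :: "complex^'a^'a" and i j k l
  assume V: "unitary_mat V"
  define f where "f W = conj_by W M $ i $ j * conj_by W M $ k $ l" for W
  have "haar_moment_tensor \<mu> M i j k l = integral\<^sup>L \<mu> f"
    unfolding haar_moment_tensor_def f_def ..
  also have "\<dots> = integral\<^sup>L (distr \<mu> borel (\<lambda>W. V ** W)) f"
    using haar_measureD(4)[OF haar V] by simp
  also have "\<dots> = (\<integral>W. f (V ** W) \<partial>\<mu>)"
    by (intro integral_distr haar_measurable[OF haar] continuous_on_matrix_mult_left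
        borel_measurable_continuous_onI)
      (simp add: f_def continuous_intros continuous_on_conj_by_nth)
  also have "\<dots> = (\<integral>W. (\<Sum>a\<in>UNIV. V$i$a * (\<Sum>b\<in>UNIV. cnj (V$j$b) * (\<Sum>c\<in>UNIV. V$k$c *
        (\<Sum>d\<in>UNIV. cnj (V$l$d) * (conj_by W M $ a $ b * conj_by W M $ c $ d))))) \<partial>\<mu>)"
    unfolding f_def conj_by_mult conj_by_nth[where W = V] sum_nested_mult_mult ..
  also have "\<dots> = (\<Sum>a\<in>UNIV. V$i$a * (\<Sum>b\<in>UNIV. cnj (V$j$b) * (\<Sum>c\<in>UNIV. V$k$c *
        (\<Sum>d\<in>UNIV. cnj (V$l$d) * haar_moment_tensor \<mu> M a b c d))))"
    using haar_integrable_conj_by_nth_mult[OF haar]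
    by (simp add: haar_moment_tensor_def integrable_sum integrable_mult_right)
  finally show "haar_moment_tensor \<mu> M i j k l = (\<Sum>a\<in>UNIV. V$i$a * (\<Sum>b\<in>UNIV. cnj (V$j$b) *
      (\<Sum>c\<in>UNIV. V$k$c * (\<Sum>d\<in>UNIV. cnj (V$l$d) * haar_moment_tensor \<mu> M a b c d))))" .
qed

lemma sum_haar_moment_tensor_swap:
  fixes M :: "complex^'a::finite^'a"
  assumes haar: "haar_measure \<mu>"
  shows "(\<Sum>i\<in>UNIV. \<Sum>j\<in>UNIV. haar_moment_tensor \<mu> M i j j i) = mtrace (M ** M)"
proof -
  have "(\<Sum>i\<in>UNIV. \<Sum>j\<in>UNIV. haar_moment_tensor \<mu> M i j j i)
      = (\<integral>W. mtrace (conj_by W M ** conj_by W M) \<partial>\<mu>)"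
    using haar_integrable_conj_by_nth_mult[OF haar]
    by (simp add: haar_moment_tensor_def mtrace_def matrix_mult_nth integrable_sum)
  also have "\<dots> = mtrace (M ** M)"
    by (intro haar_integral_eq_const[OF haar] continuous_on_mtrace_conj_by_mult)
      (simp add: conj_by_mult_conj_by mtrace_conj_by)
  finally show ?thesis .
qed

text \<open>\<open>haar_moment2 d t s x y\<close> is the Haar average of \<open>tr (W M W\<^sup>\<dagger> A) tr (W M W\<^sup>\<dagger> B)\<close> in
  dimension \<open>d\<close>, where \<open>t = tr M\<close>, \<open>s = tr (M M)\<close>, \<open>x = tr A tr B\<close> and \<open>y = tr (A B)\<close>.\<close>

definition haar_moment2 :: "'a::field \<Rightarrow> 'a \<Rightarrow> 'a \<Rightarrow> 'a \<Rightarrow> 'a \<Rightarrow> 'a" where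
  "haar_moment2 d t s x y = ((d * t\<^sup>2 - s) * x + (d * s - t\<^sup>2) * y) / (d * (d\<^sup>2 - 1))"

lemma haar_moment2_eqI:
  fixes d :: "'a::field"
  assumes "d * (d\<^sup>2 - 1) \<noteq> 0" "b * d\<^sup>2 + e * d = t\<^sup>2" "b * d + e * d\<^sup>2 = s"
  shows "b * x + e * y = haar_moment2 d t s x y"
proof -
  have "b * (d * (d\<^sup>2 - 1)) = d * (b * d\<^sup>2 + e * d) - (b * d + e * d\<^sup>2)"
    "e * (d * (d\<^sup>2 - 1)) = d * (b * d + e * d\<^sup>2) - (b * d\<^sup>2 + e * d)"
    by (simp_all add: algebra_simps power2_eq_square)
  then have "b * (d * (d\<^sup>2 - 1)) = d * t\<^sup>2 - s" "e * (d * (d\<^sup>2 - 1)) = d * s - t\<^sup>2"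
    unfolding assms(2,3) .
  then have "b = (d * t\<^sup>2 - s) / (d * (d\<^sup>2 - 1))" "e = (d * s - t\<^sup>2) / (d * (d\<^sup>2 - 1))"
    using assms(1) by (simp_all add: eq_divide_eq)
  then show ?thesis
    unfolding haar_moment2_def add_divide_distrib by simp
qed

lemma haar_moment2_sum:
  "(\<Sum>i\<in>I. c i * haar_moment2 d t s (x i) (y i))
     = haar_moment2 d t s (\<Sum>i\<in>I. c i * x i) (\<Sum>i\<in>I. c i * y i)"
proof -
  have "c i * haar_moment2 d t s (x i) (y i)
      = ((d * t\<^sup>2 - s) * (c i * x i) + (d * s - t\<^sup>2) * (c i * y i)) / (d * (d\<^sup>2 - 1))" for i
    by (simp add: haar_moment2_def algebra_simps)
  then have "(\<Sum>i\<in>I. c i * haar_moment2 d t s (x i) (y i))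
      = (\<Sum>i\<in>I. ((d * t\<^sup>2 - s) * (c i * x i) + (d * s - t\<^sup>2) * (c i * y i)) / (d * (d\<^sup>2 - 1)))"
    by (simp only:)
  also have "\<dots> = ((d * t\<^sup>2 - s) * (\<Sum>i\<in>I. c i * x i) + (d * s - t\<^sup>2) * (\<Sum>i\<in>I. c i * y i))
      / (d * (d\<^sup>2 - 1))"
    by (simp only: sum_divide_distrib[symmetric] sum.distrib sum_distrib_left)
  finally show ?thesis
    unfolding haar_moment2_def .
qed

lemma haar_moment2_scale: "haar_moment2 d t s (c * x) (c * y) = c * haar_moment2 d t s x y"
  by (simp add: haar_moment2_def algebra_simps)

lemma of_real_haar_moment2:
  "complex_of_real (haar_moment2 d t s x y) = haar_moment2 (of_real d) (of_real t) (of_real s) (of_real x) (of_real y)"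
  by (simp add: haar_moment2_def)

lemma haar_moment2_state_observable:
  fixes d p h :: real
  assumes "d \<ge> 2"
  defines "v \<equiv> (d * p - 1) / (d * (d\<^sup>2 - 1)) * h"
  shows "haar_moment2 d 1 p 0 h = v" "haar_moment2 d 0 h 1 p = v"
    and "d\<^sup>2 * v = (d\<^sup>2 * p - d) / (d\<^sup>2 - 1) * h" "d * v = (d * p - 1) / (d\<^sup>2 - 1) * h"
proof -
  have "d\<^sup>2 \<ge> 2\<^sup>2"
    using assms(1) by (intro power_mono) simp_all
  then have "d \<noteq> 0" "d\<^sup>2 - 1 \<noteq> 0"
    using assms(1) by simp_all
  then show "haar_moment2 d 1 p 0 h = v" "haar_moment2 d 0 h 1 p = v"
    "d\<^sup>2 * v = (d\<^sup>2 * p - d) / (d\<^sup>2 - 1) * h" "d * v = (d * p - 1) / (d\<^sup>2 - 1) * h"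
    unfolding v_def by (simp_all add: haar_moment2_def field_simps power2_eq_square)
qed

lemma haar_second_moment:
  fixes M A B :: "complex^'a::finite^'a"
  assumes haar: "haar_measure \<mu>" and card: "CARD('a) \<ge> 2"
  shows "(\<integral>W. mtrace (conj_by W M ** A) * mtrace (conj_by W M ** B) \<partial>\<mu>)
       = haar_moment2 (of_nat CARD('a)) (mtrace M) (mtrace (M ** M)) (mtrace A * mtrace B) (mtrace (A ** B))"
proof -
  define d :: complex where "d = of_nat CARD('a)"
  have "\<not> CARD('a) \<le> Suc 0"
    using card by simp
  then obtain i0 k0 :: 'a where ik0: "i0 \<noteq> k0"
    unfolding card_le_Suc0_iff_eq[OF finite] by blast
  define G where "G = haar_moment_tensor \<mu> M"
  define b e where "b = G i0 i0 k0 k0" and "e = G i0 k0 k0 i0"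
  have G_eq: "G i j k l = (if i = j \<and> k = l then b else 0) + (if i = l \<and> j = k then e else 0)" for i j k l
    unfolding b_def e_def G_def
    by (rule unitarily_invariant_eq[OF unitarily_invariant_haar_moment_tensor[OF haar] ik0])
  have moment: "(\<integral>W. mtrace (conj_by W M ** A) * mtrace (conj_by W M ** B) \<partial>\<mu>)
      = b * mtrace A * mtrace B + e * mtrace (A ** B)" for A B
  proof -
    have "(\<Sum>i\<in>UNIV. \<Sum>j\<in>UNIV. \<Sum>k\<in>UNIV. \<Sum>l\<in>UNIV. (A$j$i * B$l$k) * G i j k l)
        = b * mtrace A * mtrace B + e * mtrace (A ** B)"
      unfolding G_eq sum_isotropic_tensor_contract mtrace_def matrix_mult_nth ..
    then show ?thesis
      unfolding integral_mtrace_conj_by_mult[OF haar] G_def .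
  qed
  have "(\<integral>W. mtrace (conj_by W M ** mat 1) * mtrace (conj_by W M ** mat 1) \<partial>\<mu>) = (mtrace M)\<^sup>2"
    by (intro haar_integral_eq_const[OF haar] continuous_intros
        continuous_on_mtrace_conj_by_mult_right) (simp add: mtrace_conj_by power2_eq_square)
  then have contract_id: "b * d\<^sup>2 + e * d = (mtrace M)\<^sup>2"
    unfolding moment by (simp add: mtrace_mat_one d_def power2_eq_square mult.assoc)
  have contract_swap: "b * d + e * d\<^sup>2 = mtrace (M ** M)"
  proof -
    have "G i j j i = (if i = j then b else 0) + e" for i j
      using G_eq[of i j j i] by auto
    then show ?thesis
      using sum_haar_moment_tensor_swap[OF haar, of M]
      by (simp add: G_def[symmetric] sum.distrib d_def power2_eq_square algebra_simps)
  qed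
  have "d * (d\<^sup>2 - 1) \<noteq> 0"
    using card by (simp add: d_def power2_eq_square flip: of_nat_mult)
  from haar_moment2_eqI[OF this contract_id contract_swap] show ?thesis
    unfolding moment d_def by (simp only: mult.assoc)
qed

lemma Re_mtrace_conj_by_mult_mult:
  assumes "hermitian_mat M" "hermitian_mat A" "hermitian_mat B"
  shows "Re (mtrace (conj_by W M ** A)) * Re (mtrace (conj_by W M ** B))
       = Re (mtrace (conj_by W M ** A) * mtrace (conj_by W M ** B))"
  using assms by (intro Re_mult_Reals[symmetric] mtrace_mult_hermitian_real hermitian_conj_by)

lemma haar_integrable_Re_mtrace_mult:
  fixes M A B :: "complex^'a::finite^'a"
  assumes "haar_measure \<mu>" "hermitian_mat M" "hermitian_mat A" "hermitian_mat B"
  shows "integrable \<mu> (\<lambda>W. Re (mtrace (conj_by W M ** A)) * Re (mtrace (conj_by W M ** B)))"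
  unfolding Re_mtrace_conj_by_mult_mult[OF assms(2-4)]
  by (rule integrable_Re[OF haar_integrable_mtrace_mult[OF assms(1)]])

lemma haar_second_moment_hermitian:
  fixes M A B :: "complex^'a::finite^'a"
  assumes haar: "haar_measure \<mu>" and card: "CARD('a) \<ge> 2"
    and herm: "hermitian_mat M" "hermitian_mat A" "hermitian_mat B"
  shows "(\<integral>W. Re (mtrace (conj_by W M ** A)) * Re (mtrace (conj_by W M ** B)) \<partial>\<mu>)
       = haar_moment2 (real CARD('a)) (Re (mtrace M)) (Re (mtrace (M ** M)))
           (Re (mtrace A) * Re (mtrace B)) (Re (mtrace (A ** B)))"
proof -
  have real: "mtrace M \<in> \<real>" "mtrace (M ** M) \<in> \<real>" "mtrace A \<in> \<real>" "mtrace B \<in> \<real>"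
    "mtrace (A ** B) \<in> \<real>"
    using herm by (simp_all add: mtrace_hermitian_real mtrace_mult_hermitian_real)
  have "(\<integral>W. Re (mtrace (conj_by W M ** A)) * Re (mtrace (conj_by W M ** B)) \<partial>\<mu>)
      = Re (\<integral>W. mtrace (conj_by W M ** A) * mtrace (conj_by W M ** B) \<partial>\<mu>)"
    unfolding Re_mtrace_conj_by_mult_mult[OF herm]
    by (rule integral_Re[OF haar_integrable_mtrace_mult[OF haar]])
  also have "\<dots> = Re (haar_moment2 (of_nat CARD('a)) (mtrace M) (mtrace (M ** M))
                      (mtrace A * mtrace B) (mtrace (A ** B)))"
    unfolding haar_second_moment[OF haar card] ..
  also have "\<dots> = Re (of_real (haar_moment2 (real CARD('a)) (Re (mtrace M)) (Re (mtrace (M ** M)))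
                      (Re (mtrace A) * Re (mtrace B)) (Re (mtrace (A ** B)))))"
    unfolding of_real_haar_moment2 using real by (simp add: of_real_Re)
  finally show ?thesis
    by (simp only: Re_complex_of_real)
qed

lemma haar_Re_mtrace_sq:
  fixes M C :: "complex^'a::finite^'a"
  assumes "haar_measure \<mu>" "CARD('a) \<ge> 2" "hermitian_mat M" "hermitian_mat C"
  shows "(\<integral>W. (Re (mtrace (conj_by W M ** C)))\<^sup>2 \<partial>\<mu>)
       = haar_moment2 (real CARD('a)) (Re (mtrace M)) (Re (mtrace (M ** M)))
           ((Re (mtrace C))\<^sup>2) (Re (mtrace (C ** C)))"
  using haar_second_moment_hermitian[OF assms(1,2,3,4,4)] by (simp add: power2_eq_square)

section \<open>Averages over Pauli strings\<close>

lemma haar_vnorm2_Xi: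
  fixes M C :: "'n::finite op"
  assumes haar: "haar_measure \<mu>" and herm: "hermitian_mat M" "hermitian_mat C"
  defines "d \<equiv> (2::real) ^ CARD('n)"
  shows "(\<integral>W. vnorm2 (Xi (conj_by W M) C) \<partial>\<mu>)
       = d\<^sup>2 * haar_moment2 d (Re (mtrace M)) (Re (mtrace (M ** M))) ((Re (mtrace C))\<^sup>2) (Re (mtrace (C ** C)))"
proof -
  let ?c = "\<lambda>P. Re (mtrace (C ** pauli_mat P))"
  let ?m = "\<lambda>P W. Re (mtrace (conj_by W M ** pauli_mat P))"
  let ?moment = "haar_moment2 d (Re (mtrace M)) (Re (mtrace (M ** M)))"
  have moment: "(\<integral>W. ?m P W * ?m P W \<partial>\<mu>) = ?moment ((Re (mtrace (pauli_mat P)))\<^sup>2) d" for P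
    using haar_second_moment_hermitian[OF haar two_le_card_qubit_basis herm(1)
        hermitian_pauli_mat hermitian_pauli_mat]
    by (simp add: d_def card_qubit_basis Re_mtrace_pauli_mat_mult_self power2_eq_square)
  have "(\<integral>W. vnorm2 (Xi (conj_by W M) C) \<partial>\<mu>) = (\<integral>W. (\<Sum>P\<in>UNIV. (?c P)\<^sup>2 * (?m P W * ?m P W)) \<partial>\<mu>)"
    using herm by (simp add: vnorm2_def Xi_hermitian hermitian_conj_by hermitian_pauli_mat
        power2_eq_square mult_ac)
  also have "\<dots> = (\<Sum>P\<in>UNIV. (?c P)\<^sup>2 * ?moment ((Re (mtrace (pauli_mat P)))\<^sup>2) d)"
    using haar_integrable_Re_mtrace_mult[OF haar herm(1) hermitian_pauli_mat hermitian_pauli_mat]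
    by (simp add: moment)
  also have "\<dots> = ?moment (\<Sum>P\<in>UNIV. (?c P)\<^sup>2 * (Re (mtrace (pauli_mat P)))\<^sup>2) (\<Sum>P\<in>UNIV. (?c P)\<^sup>2 * d)"
    by (rule haar_moment2_sum)
  also have "\<dots> = ?moment (d\<^sup>2 * (Re (mtrace C))\<^sup>2) (d\<^sup>2 * Re (mtrace (C ** C)))"
  proof -
    have "(?c P)\<^sup>2 * (Re (mtrace (pauli_mat P)))\<^sup>2 = (if P = (\<lambda>_. PI) then d\<^sup>2 * (Re (mtrace C))\<^sup>2 else 0)"
      for P by (simp add: Re_mtrace_pauli_mat pauli_mat_identity d_def)
    then have "(\<Sum>P\<in>UNIV. (?c P)\<^sup>2 * (Re (mtrace (pauli_mat P)))\<^sup>2) = d\<^sup>2 * (Re (mtrace C))\<^sup>2"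
      by simp
    moreover have "(\<Sum>P\<in>UNIV. (?c P)\<^sup>2 * d) = d * (\<Sum>P\<in>UNIV. ?c P * ?c P)"
      by (simp add: sum_distrib_left power2_eq_square mult_ac)
    then have "(\<Sum>P\<in>UNIV. (?c P)\<^sup>2 * d) = d\<^sup>2 * Re (mtrace (C ** C))"
      using sum_pauli_Re_mtrace_mult[OF herm(2) herm(2)] by (simp add: d_def power2_eq_square)
    ultimately show ?thesis
      by simp
  qed
  also have "\<dots> = d\<^sup>2 * ?moment ((Re (mtrace C))\<^sup>2) (Re (mtrace (C ** C)))"
    by (rule haar_moment2_scale)
  finally show ?thesis .
qed

lemma haar_vdot_Xit_Xi:
  fixes M C :: "'n::finite op"
  assumes haar: "haar_measure \<mu>" and herm: "hermitian_mat M" "hermitian_mat C"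
  defines "d \<equiv> (2::real) ^ CARD('n)"
  shows "(\<integral>W. vdot (Xit (conj_by W M) C) (Xi (conj_by W M) C) \<partial>\<mu>)
       = d * haar_moment2 d (Re (mtrace M)) (Re (mtrace (M ** M))) ((Re (mtrace C))\<^sup>2) (Re (mtrace (C ** C)))"
proof -
  let ?S = "\<lambda>P. pauli_mat P ** C ** pauli_mat P"
  let ?c = "\<lambda>P. Re (mtrace (C ** pauli_mat P))"
  let ?m = "\<lambda>A W. Re (mtrace (conj_by W M ** A))"
  let ?moment = "haar_moment2 d (Re (mtrace M)) (Re (mtrace (M ** M)))"
  have herm_S: "hermitian_mat (?S P)" for P
    by (intro hermitian_sandwich hermitian_pauli_mat herm(2))
  have moment: "(\<integral>W. ?m (?S P) W * ?m (pauli_mat P) W \<partial>\<mu>)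
      = ?moment (Re (mtrace C) * Re (mtrace (pauli_mat P))) (?c P)" for P
    using haar_second_moment_hermitian[OF haar two_le_card_qubit_basis herm(1) herm_S hermitian_pauli_mat]
    by (simp add: d_def card_qubit_basis mtrace_pauli_sandwich)
  have "(\<integral>W. vdot (Xit (conj_by W M) C) (Xi (conj_by W M) C) \<partial>\<mu>)
      = (\<integral>W. (\<Sum>P\<in>UNIV. ?c P * (?m (?S P) W * ?m (pauli_mat P) W)) \<partial>\<mu>)"
    using herm by (simp add: vdot_def Xit_eq Xi_hermitian hermitian_conj_by hermitian_pauli_mat mult_ac)
  also have "\<dots> = (\<Sum>P\<in>UNIV. ?c P * ?moment (Re (mtrace C) * Re (mtrace (pauli_mat P))) (?c P))"
    using haar_integrable_Re_mtrace_mult[OF haar herm(1) herm_S hermitian_pauli_mat]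
    by (simp add: moment)
  also have "\<dots> = ?moment (\<Sum>P\<in>UNIV. ?c P * (Re (mtrace C) * Re (mtrace (pauli_mat P))))
                          (\<Sum>P\<in>UNIV. ?c P * ?c P)"
    by (rule haar_moment2_sum)
  also have "\<dots> = ?moment (d * (Re (mtrace C))\<^sup>2) (d * Re (mtrace (C ** C)))"
  proof -
    have "?c P * (Re (mtrace C) * Re (mtrace (pauli_mat P)))
        = (if P = (\<lambda>_. PI) then d * (Re (mtrace C))\<^sup>2 else 0)" for P
      by (simp add: Re_mtrace_pauli_mat pauli_mat_identity d_def power2_eq_square)
    then show ?thesis
      using sum_pauli_Re_mtrace_mult[OF herm(2) herm(2)] by (simp add: d_def)
  qed
  also have "\<dots> = d * ?moment ((Re (mtrace C))\<^sup>2) (Re (mtrace (C ** C)))"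
    by (rule haar_moment2_scale)
  finally show ?thesis .
qed

theorem mainTheorem19:
  fixes \<rho> Obs :: "'n::finite op" and \<mu> :: "('n op) measure"
  assumes "haar_measure \<mu>"
    and "density_op \<rho>"
    and "hermitian_mat Obs" and "mtrace Obs = 0"
  shows "let d = (2::real) ^ CARD('n); p = Re (mtrace (\<rho> ** \<rho>)); h = (hs_norm Obs)\<^sup>2 in
    (\<integral>W. (Re (mtrace (conj_by W \<rho> ** Obs)))\<^sup>2 \<partial>\<mu>) = (d * p - 1) / (d * (d\<^sup>2 - 1)) * h \<and>
    (\<integral>W. (Re (mtrace (\<rho> ** conj_by W Obs)))\<^sup>2 \<partial>\<mu>) = (d * p - 1) / (d * (d\<^sup>2 - 1)) * h \<and>
    (\<integral>W. vnorm2 (Xi (conj_by W \<rho>) Obs) \<partial>\<mu>) = (d\<^sup>2 * p - d) / (d\<^sup>2 - 1) * h \<and>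
    (\<integral>W. vnorm2 (Xi \<rho> (conj_by W Obs)) \<partial>\<mu>) = (d\<^sup>2 * p - d) / (d\<^sup>2 - 1) * h \<and>
    (\<integral>W. vdot (Xit (conj_by W \<rho>) Obs) (Xi (conj_by W \<rho>) Obs) \<partial>\<mu>) = (d * p - 1) / (d\<^sup>2 - 1) * h \<and>
    (\<integral>W. vdot (Xit \<rho> (conj_by W Obs)) (Xi \<rho> (conj_by W Obs)) \<partial>\<mu>) = (d * p - 1) / (d\<^sup>2 - 1) * h"
proof -
  note haar = assms(1) and card = two_le_card_qubit_basis
  have rho: "hermitian_mat \<rho>" "Re (mtrace \<rho>) = 1"
    using assms(2) by (simp_all add: density_op_def)
  have obs: "Re (mtrace Obs) = 0" "Re (mtrace (Obs ** Obs)) = (hs_norm Obs)\<^sup>2"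
    using assms(4) hs_norm_sq_hermitian[OF assms(3)] by simp_all
  note state = haar_Re_mtrace_sq[OF haar card rho(1) assms(3)]
    haar_vnorm2_Xi[OF haar rho(1) assms(3)] haar_vdot_Xit_Xi[OF haar rho(1) assms(3)]
  note observable = haar_Re_mtrace_sq[OF haar card assms(3) rho(1)]
    haar_vnorm2_Xi[OF haar assms(3) rho(1)] haar_vdot_Xit_Xi[OF haar assms(3) rho(1)]
  note moment_values = haar_moment2_state_observable[OF two_le_two_power_card,
      where p = "Re (mtrace (\<rho> ** \<rho>))" and h = "(hs_norm Obs)\<^sup>2"]
  show ?thesis
    unfolding Let_def mtrace_mult_commute[of \<rho> "conj_by _ Obs"] Xi_commute[of \<rho>] Xit_commute[of \<rho>]
    using state observable
    unfolding card_qubit_basis of_nat_power of_nat_numeral rho(2) obs power_zero_numeral one_power2 moment_values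
    by blast
qed

end
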